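(* Let $n\ge1$. If $\mathcal W$ is an $(n,T(n))$-weakly Ramsey non-P-point in standard position on $\omega^2$, then there is a set $P\in\mathcal W$ such that every $n$-element subset of $P$ realizes some $n$-type.
   Context: Ultrafilters are nonprincipal. A non-P-point in standard position is an ultrafilter $\mathcal W$ on $\omega^2$ such that $\pi_1:\omega^2\to\omega$ (first projection) is neither finite-to-one nor constant on any set in $\mathcal W$. $\mathcal W$ is $(n,t)$-weakly Ramsey if for every partition of $[\omega^2]^n$ into finitely many pieces there is $H\in\mathcal W$ with $[H]^n$ meeting at most $t$ pieces. An $n$-type is a linear pre-order of the formal symbols $x_1,\dots,x_n,y_1,\dots,y_n$ with $y_1<\dots<y_n$ strictly, each $x_i<y_i$ strictly, and any two distinct equivalent symbols both $x$'s. An $n$-element set $\{\langle a_1,b_1\rangle,\dots,\langle a_n,b_n\rangle\}\subseteq\omega^2$ with $b_1<\dots<b_n$ realizes $\tau$ if for all symbols $s,t$: $s\le_\tau t$ iff $v(s)\le v(t)$, with $v(x_i)=a_i,v(y_i)=b_i$; a set with two elements sharing a second coordinate realizes no type. $T(n)$ is the number of $n$-types. *)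

theory Defs
  imports Main "HOL-Library.Ramsey"
begin

definition ultrafilter_on :: "'a set set \<Rightarrow> bool" where
  "ultrafilter_on U \<longleftrightarrow>
     UNIV \<in> U \<and> {} \<notin> U \<and>
     (\<forall>A B. A \<in> U \<and> A \<subseteq> B \<longrightarrow> B \<in> U) \<and>
     (\<forall>A B. A \<in> U \<and> B \<in> U \<longrightarrow> A \<inter> B \<in> U) \<and>
     (\<forall>A. A \<in> U \<or> - A \<in> U)"

definition nonprincipal :: "'a set set \<Rightarrow> bool" where
  "nonprincipal U \<longleftrightarrow> (\<forall>x. {x} \<notin> U)"

text \<open>omega^2 is nat \<times> nat; pi_1 is fst.\<close>
definition finite_to_one_on :: "('a \<Rightarrow> 'b) \<Rightarrow> 'a set \<Rightarrow> bool" where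
  "finite_to_one_on f A \<longleftrightarrow> (\<forall>y. finite {p \<in> A. f p = y})"

definition constant_on :: "('a \<Rightarrow> 'b) \<Rightarrow> 'a set \<Rightarrow> bool" where
  "constant_on f A \<longleftrightarrow> (\<exists>y. \<forall>p \<in> A. f p = y)"

definition non_P_point_std :: "(nat \<times> nat) set set \<Rightarrow> bool" where
  "non_P_point_std W \<longleftrightarrow> ultrafilter_on W \<and> nonprincipal W \<and>
     (\<forall>A \<in> W. \<not> finite_to_one_on fst A \<and> \<not> constant_on fst A)"

text \<open>(n,t)-weakly Ramsey: every partition of [omega^2]^n into finitely many pieces
  (a colouring with k colours) has a homogeneous-ish H in W meeting at most t pieces.\<close>
definition weakly_ramsey :: "(nat \<times> nat) set set \<Rightarrow> nat \<Rightarrow> nat \<Rightarrow> bool" where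
  "weakly_ramsey W n t \<longleftrightarrow>
     (\<forall>(k::nat) (c :: (nat \<times> nat) set \<Rightarrow> nat). c \<in> nsets UNIV n \<rightarrow> {..<k} \<longrightarrow>
        (\<exists>H \<in> W. card (c ` nsets H n) \<le> t))"

text \<open>Formal symbols: (False, i) is x_i, (True, i) is y_i, for 1 \<le> i \<le> n.\<close>
definition symbols :: "nat \<Rightarrow> (bool \<times> nat) set" where
  "symbols n = UNIV \<times> {1..n}"

definition strict_rel :: "('a \<times> 'a) set \<Rightarrow> 'a \<Rightarrow> 'a \<Rightarrow> bool" where
  "strict_rel r s t \<longleftrightarrow> (s, t) \<in> r \<and> (t, s) \<notin> r"

definition is_type :: "nat \<Rightarrow> ((bool \<times> nat) \<times> (bool \<times> nat)) set \<Rightarrow> bool" where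
  "is_type n \<tau> \<longleftrightarrow>
     \<tau> \<subseteq> symbols n \<times> symbols n \<and>
     refl_on (symbols n) \<tau> \<and> trans \<tau> \<and> total_on (symbols n) \<tau> \<and>
     (\<forall>i j. 1 \<le> i \<and> i < j \<and> j \<le> n \<longrightarrow> strict_rel \<tau> (True, i) (True, j)) \<and>
     (\<forall>i. 1 \<le> i \<and> i \<le> n \<longrightarrow> strict_rel \<tau> (False, i) (True, i)) \<and>
     (\<forall>s \<in> symbols n. \<forall>t \<in> symbols n.
        s \<noteq> t \<and> (s, t) \<in> \<tau> \<and> (t, s) \<in> \<tau> \<longrightarrow> fst s = False \<and> fst t = False)"

definition T :: "nat \<Rightarrow> nat" where
  "T n = card {\<tau>. is_type n \<tau>}"

definition realizes :: "nat \<Rightarrow> ((bool \<times> nat) \<times> (bool \<times> nat)) set \<Rightarrow> (nat \<times> nat) set \<Rightarrow> bool" where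
  "realizes n \<tau> X \<longleftrightarrow>
     (\<exists>a b :: nat \<Rightarrow> nat.
        X = (\<lambda>i. (a i, b i)) ` {1..n} \<and> strict_mono_on {1..n} b \<and>
        (let v = (\<lambda>s. if fst s then b (snd s) else a (snd s)) in
          \<forall>s \<in> symbols n. \<forall>t \<in> symbols n. (s, t) \<in> \<tau> \<longleftrightarrow> v s \<le> v t))"

end

theory Submission
  imports Defs
begin

text \<open>Colour each n-subset of \<open>\<omega>\<^sup>2\<close> by the n-type it realizes, or by one extra colour if it
  realizes none: \<open>T(n) + 1\<close> colours. Every set in a non-P-point in standard position has
  infinitely many infinite columns, and in such a set every n-type is realized: place the
  symbols in the order the type prescribes, sending each \<open>x\<^sub>i\<close> to a new infinite column and each
  \<open>y\<^sub>i\<close> to a large point of the column of \<open>x\<^sub>i\<close>. Hence on every \<open>H \<in> \<W>\<close> the colouring takes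
  all \<open>T(n)\<close> type colours, and a set witnessing \<open>(n, T(n))\<close>-weak Ramseyness has no room left
  for the extra colour.\<close>

lemma ultrafilter_on_Un_cases:
  assumes "ultrafilter_on U" "A \<union> B \<in> U"
  shows "A \<in> U \<or> B \<in> U"
proof (rule disjCI)
  assume "B \<notin> U"
  then have "(A \<union> B) \<inter> - B \<in> U" using assms unfolding ultrafilter_on_def by blast
  moreover have "(A \<union> B) \<inter> - B \<subseteq> A" by blast
  ultimately show "A \<in> U" using assms(1) unfolding ultrafilter_on_def by blast
qed

lemma ultrafilter_on_finite_image_fiber:
  assumes uf: "ultrafilter_on U" and "finite F"
  shows "S \<in> U \<Longrightarrow> f ` S \<subseteq> F \<Longrightarrow> \<exists>a\<in>F. {x\<in>S. f x = a} \<in> U"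
  using \<open>finite F\<close>
proof (induction F arbitrary: S)
  case empty
  then show ?case using uf unfolding ultrafilter_on_def by auto
next
  case (insert a F)
  have "S = {x\<in>S. f x = a} \<union> {x\<in>S. f x \<in> F}" using insert.prems(2) by auto
  then have "{x\<in>S. f x = a} \<in> U \<or> {x\<in>S. f x \<in> F} \<in> U"
    using ultrafilter_on_Un_cases[OF uf] insert.prems(1) by metis
  moreover have "{x\<in>{x\<in>S. f x \<in> F}. f x = b} = {x\<in>S. f x = b}" if "b \<in> F" for b
    using that by auto
  ultimately show ?case using insert.IH[of "{x\<in>S. f x \<in> F}"] by auto
qed

lemma non_P_point_std_infinite_columns:
  assumes W: "non_P_point_std W" and H: "H \<in> W"
  shows "infinite {a. infinite {b. (a, b) \<in> H}}"
proof
  assume fin: "finite {a. infinite {b. (a, b) \<in> H}}"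
  have uf: "ultrafilter_on W"
    and thin: "\<And>A. A \<in> W \<Longrightarrow> \<not> finite_to_one_on fst A \<and> \<not> constant_on fst A"
    using W unfolding non_P_point_std_def by auto
  define G where "G = {p\<in>H. infinite {b. (fst p, b) \<in> H}}"
  have "finite {p \<in> H - G. fst p = a}" for a
  proof (cases "finite {b. (a, b) \<in> H}")
    case True
    have "{p \<in> H - G. fst p = a} \<subseteq> {a} \<times> {b. (a, b) \<in> H}" by auto
    then show ?thesis using True finite_subset by blast
  next
    case False
    then have "{p \<in> H - G. fst p = a} = {}" unfolding G_def by auto
    then show ?thesis by (metis finite.emptyI)
  qed
  then have "H - G \<notin> W" using thin unfolding finite_to_one_on_def by blast
  moreover have "H = G \<union> (H - G)" unfolding G_def by blast
  ultimately have "G \<in> W" using ultrafilter_on_Un_cases[OF uf] H by metis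
  moreover have "fst ` G \<subseteq> {a. infinite {b. (a, b) \<in> H}}" unfolding G_def by auto
  ultimately obtain a where "{p\<in>G. fst p = a} \<in> W"
    using ultrafilter_on_finite_image_fiber[OF uf fin] by blast
  moreover have "constant_on fst {p\<in>G. fst p = a}" unfolding constant_on_def by blast
  ultimately show False using thin by blast
qed

definition preorder_rank :: "'a rel \<Rightarrow> 'a set \<Rightarrow> 'a \<Rightarrow> nat" where
  "preorder_rank r S s = card {u\<in>S. (u, s) \<in> r}"

lemma preorder_rank_le_card:
  "finite S \<Longrightarrow> preorder_rank r S s \<le> card S"
  unfolding preorder_rank_def by (intro card_mono) auto

lemma preorder_rank_le_iff:
  assumes fin: "finite S" and refl: "refl_on S r" and trans: "trans r" and total: "total_on S r"
    and s: "s \<in> S" and t: "t \<in> S"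
  shows "(s, t) \<in> r \<longleftrightarrow> preorder_rank r S s \<le> preorder_rank r S t"
proof
  assume "(s, t) \<in> r"
  then have "{u\<in>S. (u, s) \<in> r} \<subseteq> {u\<in>S. (u, t) \<in> r}" using trans by (auto dest: transD)
  then show "preorder_rank r S s \<le> preorder_rank r S t"
    unfolding preorder_rank_def using fin by (intro card_mono) auto
next
  assume le: "preorder_rank r S s \<le> preorder_rank r S t"
  show "(s, t) \<in> r"
  proof (rule ccontr)
    assume st: "(s, t) \<notin> r"
    then have "(t, s) \<in> r" using refl total s t unfolding refl_on_def total_on_def by metis
    then have "{u\<in>S. (u, t) \<in> r} \<subseteq> {u\<in>S. (u, s) \<in> r}" using trans by (auto dest: transD)
    moreover have "s \<in> {u\<in>S. (u, s) \<in> r} - {u\<in>S. (u, t) \<in> r}" using refl s st by (auto dest: refl_onD)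
    ultimately have "{u\<in>S. (u, t) \<in> r} \<subset> {u\<in>S. (u, s) \<in> r}" by blast
    then have "preorder_rank r S t < preorder_rank r S s"
      unfolding preorder_rank_def using fin by (intro psubset_card_mono) auto
    then show False using le by simp
  qed
qed

context
  fixes H :: "(nat \<times> nat) set" and I :: "'i set" and xr yr :: "'i \<Rightarrow> nat"
  assumes infinite_columns: "infinite {a. infinite {b. (a, b) \<in> H}}"
    and xy_less: "\<And>i. i \<in> I \<Longrightarrow> xr i < yr i"
    and yr_inj: "inj_on yr I"
    and xy_ne: "\<And>i j. i \<in> I \<Longrightarrow> j \<in> I \<Longrightarrow> xr i \<noteq> yr j"
begin

lemma ex_next_embedding_value:
  assumes col: "\<And>i. i \<in> I \<Longrightarrow> xr i < k \<Longrightarrow> infinite {b. (g (xr i), b) \<in> H}"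
  shows "\<exists>v>B. (\<forall>i\<in>I. xr i = k \<longrightarrow> infinite {b. (v, b) \<in> H}) \<and>
    (\<forall>i\<in>I. yr i = k \<longrightarrow> (g (xr i), v) \<in> H)"
proof (cases "\<exists>i\<in>I. xr i = k")
  case True
  then have "\<forall>i\<in>I. yr i \<noteq> k" using xy_ne by metis
  moreover obtain v where "v > B" "infinite {b. (v, b) \<in> H}"
    using infinite_columns unfolding infinite_nat_iff_unbounded by blast
  ultimately show ?thesis by blast
next
  case no_x: False
  show ?thesis
  proof (cases "\<exists>j\<in>I. yr j = k")
    case True
    then obtain j where j: "j \<in> I" "yr j = k" by blast
    then have "infinite {b. (g (xr j), b) \<in> H}" using col xy_less by blast
    then obtain v where "v > B" "(g (xr j), v) \<in> H"
      unfolding infinite_nat_iff_unbounded by blast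
    moreover have "i = j" if "i \<in> I" "yr i = k" for i
      using yr_inj j that by (auto dest: inj_onD)
    ultimately show ?thesis using no_x by blast
  next
    case False
    then show ?thesis using no_x by (intro exI[of _ "Suc B"]) auto
  qed
qed

text \<open>Keeping every x-position in an infinite column is what leaves room, above all values
  chosen so far, for the y-positions of that column that come later.\<close>
lemma ex_strict_mono_embedding_into_columns:
  "\<exists>g. strict_mono_on {..<k} g \<and>
    (\<forall>i\<in>I. xr i < k \<longrightarrow> infinite {b. (g (xr i), b) \<in> H}) \<and>
    (\<forall>i\<in>I. yr i < k \<longrightarrow> (g (xr i), g (yr i)) \<in> H)"
proof (induction k)
  case 0
  show ?case by (auto intro: strict_mono_onI)
next
  case (Suc k)
  then obtain g where mono: "strict_mono_on {..<k} g"
    and col: "\<And>i. i \<in> I \<Longrightarrow> xr i < k \<Longrightarrow> infinite {b. (g (xr i), b) \<in> H}"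
    and pair: "\<And>i. i \<in> I \<Longrightarrow> yr i < k \<Longrightarrow> (g (xr i), g (yr i)) \<in> H"
    by blast
  define B where "B = (\<Sum>i<k. g i)"
  have below_B: "g i \<le> B" if "i < k" for i
    unfolding B_def using that by (intro member_le_sum) auto
  obtain v where "v > B"
    and v_col: "\<And>i. i \<in> I \<Longrightarrow> xr i = k \<Longrightarrow> infinite {b. (v, b) \<in> H}"
    and v_pair: "\<And>i. i \<in> I \<Longrightarrow> yr i = k \<Longrightarrow> (g (xr i), v) \<in> H"
    using ex_next_embedding_value[where k = k and g = g and B = B, OF col] by blast
  show ?case
  proof (intro exI[of _ "g(k := v)"] conjI ballI impI)
    show "strict_mono_on {..<Suc k} (g(k := v))"
    proof (rule strict_mono_onI)
      fix i j assume "i \<in> {..<Suc k}" "j \<in> {..<Suc k}" "i < j"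
      then show "(g(k := v)) i < (g(k := v)) j"
        using below_B[of i] \<open>v > B\<close> strict_mono_onD[OF mono, of i j] by (cases "j = k") auto
    qed
  next
    fix i assume "i \<in> I" "xr i < Suc k"
    then show "infinite {b. ((g(k := v)) (xr i), b) \<in> H}"
      using col v_col by (cases "xr i = k") auto
  next
    fix i assume i: "i \<in> I" "yr i < Suc k"
    then have "xr i < k" using xy_less[of i] xy_ne[of i i] by auto
    then show "((g(k := v)) (xr i), (g(k := v)) (yr i)) \<in> H"
      using i pair v_pair by (cases "yr i = k") auto
  qed
qed

end

lemma finite_symbols [simp]: "finite (symbols n)"
  by (simp add: symbols_def)

lemma mem_symbols_iff [simp]: "(c, i) \<in> symbols n \<longleftrightarrow> i \<in> {1..n}"
  by (simp add: symbols_def)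

lemma is_type_rank_le_iff:
  assumes "is_type n \<tau>" "s \<in> symbols n" "t \<in> symbols n"
  shows "(s, t) \<in> \<tau> \<longleftrightarrow> preorder_rank \<tau> (symbols n) s \<le> preorder_rank \<tau> (symbols n) t"
  using assms unfolding is_type_def by (intro preorder_rank_le_iff) auto

lemma is_type_rank_less:
  assumes "is_type n \<tau>" "s \<in> symbols n" "t \<in> symbols n" "strict_rel \<tau> s t"
  shows "preorder_rank \<tau> (symbols n) s < preorder_rank \<tau> (symbols n) t"
  using assms is_type_rank_le_iff[of n \<tau> t s] unfolding strict_rel_def by auto

lemma is_type_rank_x_neq_y:
  assumes type: "is_type n \<tau>" and "i \<in> {1..n}" "j \<in> {1..n}"
  shows "preorder_rank \<tau> (symbols n) (False, i) \<noteq> preorder_rank \<tau> (symbols n) (True, j)"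
proof
  assume "preorder_rank \<tau> (symbols n) (False, i) = preorder_rank \<tau> (symbols n) (True, j)"
  then have "((False, i), (True, j)) \<in> \<tau>" "((True, j), (False, i)) \<in> \<tau>"
    using assms is_type_rank_le_iff[of n \<tau> "(False, i)" "(True, j)"]
      is_type_rank_le_iff[of n \<tau> "(True, j)" "(False, i)"] by simp_all
  then show False using type assms(2,3) unfolding is_type_def by fastforce
qed

lemma realizes_card:
  assumes "realizes n \<tau> X"
  shows "card X = n"
proof -
  obtain a b where X: "X = (\<lambda>i. (a i, b i)) ` {1..n}" and b: "strict_mono_on {1..n} b"
    using assms unfolding realizes_def by blast
  have "inj_on (\<lambda>i. (a i, b i)) {1..n}"
    using strict_mono_on_imp_inj_on[OF b] by (intro inj_on_imageI2[of snd]) (simp add: comp_def)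
  then show ?thesis unfolding X by (simp add: card_image)
qed

lemma realizes_rank_embedding:
  fixes n :: nat and \<tau> :: "((bool \<times> nat) \<times> (bool \<times> nat)) set" and g :: "nat \<Rightarrow> nat"
  defines "rk \<equiv> preorder_rank \<tau> (symbols n)"
  assumes type: "is_type n \<tau>" and g: "strict_mono_on {..<Suc (card (symbols n))} g"
  shows "realizes n \<tau> ((\<lambda>i. (g (rk (False, i)), g (rk (True, i)))) ` {1..n})"
  unfolding realizes_def Let_def
proof (rule exI[of _ "\<lambda>i. g (rk (False, i))"], rule exI[of _ "\<lambda>i. g (rk (True, i))"], intro conjI ballI)
  have rk_bound: "rk s \<in> {..<Suc (card (symbols n))}" for s
    using preorder_rank_le_card[OF finite_symbols] unfolding rk_def by (simp add: less_Suc_eq_le)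
  show "strict_mono_on {1..n} (\<lambda>i. g (rk (True, i)))"
  proof (rule strict_mono_onI)
    fix i j :: nat assume "i \<in> {1..n}" "j \<in> {1..n}" "i < j"
    then have "rk (True, i) < rk (True, j)"
      using type unfolding rk_def is_type_def by (intro is_type_rank_less[OF type]) auto
    then show "g (rk (True, i)) < g (rk (True, j))" using strict_mono_onD[OF g] rk_bound by blast
  qed
  fix s t assume "s \<in> symbols n" "t \<in> symbols n"
  moreover have "(if fst u then g (rk (True, snd u)) else g (rk (False, snd u))) = g (rk u)" for u
    by (cases u) auto
  ultimately show "(s, t) \<in> \<tau> \<longleftrightarrow> (if fst s then g (rk (True, snd s)) else g (rk (False, snd s)))
      \<le> (if fst t then g (rk (True, snd t)) else g (rk (False, snd t)))"
    using is_type_rank_le_iff[OF type, of s t] strict_mono_on_less_eq[OF g rk_bound rk_bound, of s t]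
    unfolding rk_def by simp
qed simp

lemma is_type_realized:
  assumes type: "is_type n \<tau>" and cols: "infinite {a. infinite {b. (a, b) \<in> H}}"
  shows "\<exists>X \<in> nsets H n. realizes n \<tau> X"
proof -
  define N where "N = Suc (card (symbols n))"
  define xr where "xr i = preorder_rank \<tau> (symbols n) (False, i)" for i
  define yr where "yr i = preorder_rank \<tau> (symbols n) (True, i)" for i
  have xy_less: "xr i < yr i" if "i \<in> {1..n}" for i
    using type that unfolding xr_def yr_def is_type_def by (intro is_type_rank_less[OF type]) auto
  have yr_inj: "inj_on yr {1..n}"
    using type unfolding yr_def is_type_def
    by (intro strict_mono_on_imp_inj_on strict_mono_onI is_type_rank_less[OF type]) auto
  have xy_ne: "xr i \<noteq> yr j" if "i \<in> {1..n}" "j \<in> {1..n}" for i j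
    unfolding xr_def yr_def using is_type_rank_x_neq_y[OF type that] .
  obtain g where g_mono: "strict_mono_on {..<N} g"
    and "\<forall>i\<in>{1..n}. yr i < N \<longrightarrow> (g (xr i), g (yr i)) \<in> H"
    using ex_strict_mono_embedding_into_columns[OF cols xy_less yr_inj xy_ne, of N] by blast
  then have "(g (xr i), g (yr i)) \<in> H" if "i \<in> {1..n}" for i
    using that preorder_rank_le_card[OF finite_symbols] unfolding yr_def N_def
    by (simp add: less_Suc_eq_le)
  moreover have "realizes n \<tau> ((\<lambda>i. (g (xr i), g (yr i))) ` {1..n})"
    using realizes_rank_embedding[OF type g_mono[unfolded N_def]] unfolding xr_def yr_def .
  ultimately show ?thesis
    using realizes_card unfolding nsets_def by (intro bexI[of _ "(\<lambda>i. (g (xr i), g (yr i))) ` {1..n}"]) auto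
qed

lemma strict_mono_on_image_eq:
  fixes b b' :: "nat \<Rightarrow> 'a::linorder"
  assumes "strict_mono_on {1..n} b" "strict_mono_on {1..n} b'" "b ` {1..n} = b' ` {1..n}"
    and "i \<in> {1..n}"
  shows "b i = b' i"
proof -
  have sorted: "sorted_wrt (<) (map f [1..<Suc n])" if "strict_mono_on {1..n} f" for f :: "nat \<Rightarrow> 'a"
    unfolding sorted_wrt_map
    by (rule sorted_wrt_mono_rel[OF _ sorted_wrt_upt]) (use that in \<open>auto simp: strict_mono_on_def\<close>)
  have set_map: "set (map f [1..<Suc n]) = f ` {1..n}" for f :: "nat \<Rightarrow> 'a"
    by (simp only: set_map set_upt atLeastLessThanSuc_atLeastAtMost)
  have "map b [1..<Suc n] = map b' [1..<Suc n]"
  proof (rule sorted_distinct_set_unique)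
    show "set (map b [1..<Suc n]) = set (map b' [1..<Suc n])"
      unfolding set_map by (rule assms(3))
  qed (use sorted[OF assms(1)] sorted[OF assms(2)] in \<open>simp_all only: strict_sorted_iff\<close>)
  then have "\<forall>x\<in>set [1..<Suc n]. b x = b' x" by (simp only: map_eq_conv)
  then show ?thesis using assms(4) by (metis atLeastLessThanSuc_atLeastAtMost set_upt)
qed

lemma realizes_unique:
  assumes "is_type n \<tau>" "is_type n \<tau>'" "realizes n \<tau> X" "realizes n \<tau>' X"
  shows "\<tau> = \<tau>'"
proof -
  obtain a b where X: "X = (\<lambda>i. (a i, b i)) ` {1..n}" and b: "strict_mono_on {1..n} b"
    and \<tau>: "\<And>s t. s \<in> symbols n \<Longrightarrow> t \<in> symbols n \<Longrightarrow> (s, t) \<in> \<tau> \<longleftrightarrow>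
      (if fst s then b (snd s) else a (snd s)) \<le> (if fst t then b (snd t) else a (snd t))"
    using assms(3) unfolding realizes_def Let_def by blast
  obtain a' b' where X': "X = (\<lambda>i. (a' i, b' i)) ` {1..n}" and b': "strict_mono_on {1..n} b'"
    and \<tau>': "\<And>s t. s \<in> symbols n \<Longrightarrow> t \<in> symbols n \<Longrightarrow> (s, t) \<in> \<tau>' \<longleftrightarrow>
      (if fst s then b' (snd s) else a' (snd s)) \<le> (if fst t then b' (snd t) else a' (snd t))"
    using assms(4) unfolding realizes_def Let_def by blast
  have "b ` {1..n} = snd ` X" unfolding X by (simp add: image_image)
  also have "\<dots> = b' ` {1..n}" unfolding X' by (simp add: image_image)
  finally have bb: "b i = b' i" if "i \<in> {1..n}" for i
    using strict_mono_on_image_eq[OF b b'] that by blast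
  have aa: "a i = a' i" if i: "i \<in> {1..n}" for i
  proof -
    have "(a i, b i) \<in> X" using i unfolding X by blast
    then obtain j where j: "j \<in> {1..n}" "(a i, b i) = (a' j, b' j)" unfolding X' by blast
    then have "i = j" using bb[OF i] strict_mono_on_eqD[OF b' _ j(1) i] by simp
    then show ?thesis using j by simp
  qed
  have "\<tau> \<subseteq> symbols n \<times> symbols n" "\<tau>' \<subseteq> symbols n \<times> symbols n"
    using assms(1,2) unfolding is_type_def by auto
  moreover have "(s, t) \<in> \<tau> \<longleftrightarrow> (s, t) \<in> \<tau>'" if "s \<in> symbols n" "t \<in> symbols n" for s t
    using \<tau>[OF that] \<tau>'[OF that] that aa bb by (auto simp: symbols_def)
  ultimately show ?thesis by auto
qed

lemma finite_types: "finite {\<tau>. is_type n \<tau>}"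
  by (rule finite_subset[of _ "Pow (symbols n \<times> symbols n)"])
    (auto simp: is_type_def symbols_def)

lemma weakly_ramsey_finite_colours:
  assumes "weakly_ramsey W n t" "finite C" "c \<in> nsets UNIV n \<rightarrow> C"
  shows "\<exists>H \<in> W. card (c ` nsets H n) \<le> t"
proof -
  obtain e where e: "bij_betw e C {0..<card C}"
    using ex_bij_betw_finite_nat[OF assms(2)] by blast
  then have "(e \<circ> c) \<in> nsets UNIV n \<rightarrow> {..<card C}"
    using assms(3) unfolding bij_betw_def by fastforce
  then obtain H where H: "H \<in> W" and few: "card ((e \<circ> c) ` nsets H n) \<le> t"
    using assms(1) unfolding weakly_ramsey_def by blast
  have "inj_on e (c ` nsets H n)"
    using e assms(3) by (auto simp: bij_betw_def nsets_def intro: inj_on_subset)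
  then have "card ((e \<circ> c) ` nsets H n) = card (c ` nsets H n)"
    unfolding image_comp[symmetric] by (rule card_image)
  then show ?thesis using H few by auto
qed

definition type_colouring :: "nat \<Rightarrow> (nat \<times> nat) set \<Rightarrow> ((bool \<times> nat) \<times> (bool \<times> nat)) set option" where
  "type_colouring n X =
    (if \<exists>\<tau>. is_type n \<tau> \<and> realizes n \<tau> X then Some (THE \<tau>. is_type n \<tau> \<and> realizes n \<tau> X) else None)"

lemma type_colouring_eq_Some:
  assumes "is_type n \<tau>" "realizes n \<tau> X"
  shows "type_colouring n X = Some \<tau>"
proof -
  have "(THE \<tau>. is_type n \<tau> \<and> realizes n \<tau> X) = \<tau>"
  proof (rule the_equality)
    show "is_type n \<tau> \<and> realizes n \<tau> X" using assms by simp
    show "\<tau>' = \<tau>" if "is_type n \<tau>' \<and> realizes n \<tau>' X" for \<tau>'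
      using realizes_unique[of n \<tau>' \<tau> X] that assms by simp
  qed
  then show ?thesis using assms unfolding type_colouring_def by auto
qed

lemma type_colouring_eq_None_iff:
  "type_colouring n X = None \<longleftrightarrow> \<not> (\<exists>\<tau>. is_type n \<tau> \<and> realizes n \<tau> X)"
  unfolding type_colouring_def by simp

lemma type_colouring_range: "type_colouring n X \<in> insert None (Some ` {\<tau>. is_type n \<tau>})"
proof (cases "\<exists>\<tau>. is_type n \<tau> \<and> realizes n \<tau> X")
  case True
  then obtain \<tau> where "is_type n \<tau>" "realizes n \<tau> X" by blast
  then show ?thesis by (simp add: type_colouring_eq_Some)
next
  case False
  then show ?thesis by (simp add: type_colouring_eq_None_iff)
qed

lemma type_colours_realized:
  assumes "infinite {a. infinite {b. (a, b) \<in> H}}"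
  shows "Some ` {\<tau>. is_type n \<tau>} \<subseteq> type_colouring n ` nsets H n"
proof
  fix c assume "c \<in> Some ` {\<tau>. is_type n \<tau>}"
  then obtain \<tau> where "c = Some \<tau>" and \<tau>: "is_type n \<tau>" by blast
  moreover obtain X where "X \<in> nsets H n" "realizes n \<tau> X"
    using is_type_realized[OF \<tau> assms] by blast
  ultimately show "c \<in> type_colouring n ` nsets H n"
    using type_colouring_eq_Some by (metis image_eqI)
qed

theorem mainTheorem4:
  fixes n :: nat and W :: "(nat \<times> nat) set set"
  assumes "n \<ge> 1"
    and "non_P_point_std W"
    and "weakly_ramsey W n (T n)"
  shows "\<exists>P \<in> W. \<forall>X \<in> nsets P n. \<exists>\<tau>. is_type n \<tau> \<and> realizes n \<tau> X"
proof -
  let ?C = "insert None (Some ` {\<tau>. is_type n \<tau>})"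
  have fin_C: "finite ?C" using finite_types by simp
  obtain H where H: "H \<in> W" and few: "card (type_colouring n ` nsets H n) \<le> T n"
    using weakly_ramsey_finite_colours[OF assms(3) fin_C] type_colouring_range by blast
  have all_types: "Some ` {\<tau>. is_type n \<tau>} \<subseteq> type_colouring n ` nsets H n"
    using type_colours_realized non_P_point_std_infinite_columns[OF assms(2) H] .
  have "None \<notin> type_colouring n ` nsets H n"
  proof
    assume "None \<in> type_colouring n ` nsets H n"
    with all_types have "?C \<subseteq> type_colouring n ` nsets H n" by blast
    moreover have "type_colouring n ` nsets H n \<subseteq> ?C" by (rule image_subsetI) (rule type_colouring_range)
    ultimately have "?C = type_colouring n ` nsets H n" by (rule subset_antisym)
    then have "card ?C \<le> T n" using few by simp
    moreover have "card ?C = Suc (T n)" using finite_types by (simp add: T_def card_image)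
    ultimately show False by simp
  qed
  then show ?thesis using H type_colouring_eq_None_iff by (metis image_eqI)
qed

end
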